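(* Let $m\ge 1$ and $0\le k\le m$ be integers. Let $U_1$ be the $2m\times 2m$ integer matrix whose entries in positions $(i,i+1)$ and $(i+1,i)$ ($1\le i\le 2m-1$) are $1$ and all of whose other entries are $0$. For a subset $\alpha\subseteq\{1,\dots,2m\}$, let $U_1(\alpha)$ denote the submatrix of $U_1$ obtained by deleting the rows and columns with indices in $\alpha$. Then $$\sum_{\alpha\subseteq\{1,\dots,2m\},\ |\alpha|=2k}\mathrm{Hf}\big(U_1(\alpha)\big)=\binom{m+k}{m-k}.$$
   Context: For a symmetric matrix $A=(a_{ij})$ of even order $n$ over a commutative ring, the hafnian is $\mathrm{Hf}(A)=\sum a_{i_1i_2}a_{i_3i_4}\cdots a_{i_{n-1}i_n}$, where the sum runs over all partitions of the index set of $A$ into $n/2$ disjoint unordered pairs $\{i_1,i_2\},\dots,\{i_{n-1},i_n\}$ (each partition counted once). The hafnian of the empty ($0\times 0$) matrix is $1$. *)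

theory Defs
  imports Main
begin

definition perfect_matchings :: "nat set \<Rightarrow> nat set set set" where
  "perfect_matchings S =
     {M. (\<forall>e\<in>M. \<exists>i j. i \<noteq> j \<and> i \<in> S \<and> j \<in> S \<and> e = {i, j}) \<and>
         (\<forall>x\<in>S. \<exists>!e. e \<in> M \<and> x \<in> e)}"

text \<open>Hafnian of the symmetric matrix A restricted to the rows/columns with
  indices in S (i.e. the principal submatrix on S); each pair e contributes
  the entry A (Min e) (Max e).  The hafnian of the empty matrix is 1.\<close>
definition hafnian :: "(nat \<Rightarrow> nat \<Rightarrow> 'a::comm_ring_1) \<Rightarrow> nat set \<Rightarrow> 'a" where
  "hafnian A S = (\<Sum>M\<in>perfect_matchings S. \<Prod>e\<in>M. A (Min e) (Max e))"

definition U1 :: "nat \<Rightarrow> nat \<Rightarrow> nat \<Rightarrow> int" where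
  "U1 m i j = (if i \<in> {1..2*m} \<and> j \<in> {1..2*m} \<and> (i = j + 1 \<or> j = i + 1) then 1 else 0)"

end

theory Submission
  imports Defs
begin

text \<open>Since the only nonzero entries of \<open>U\<^sub>1\<close> sit at positions \<open>(i, i + 1)\<close>, a perfect
  matching contributes to \<open>Hf(U\<^sub>1(\<alpha>))\<close> exactly when all its pairs are dominoes \<open>{i, i + 1}\<close>,
  and then it contributes 1.  A domino matching is determined by the set \<open>I\<close> of left ends of
  its dominoes, a set of pairwise nonadjacent indices in \<open>{1..2m - 1}\<close>; conversely each such
  \<open>I\<close> with \<open>|I| = m - k\<close> is a perfect domino matching of the complement of a unique \<open>\<alpha>\<close>
  with \<open>|\<alpha>| = 2k\<close>.  Hence the sum counts the \<open>(m - k)\<close>-subsets of \<open>{1..2m - 1}\<close> with no two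
  consecutive elements.  By the recursion that splits off the largest index, \<open>{1..n}\<close> has
  \<open>C(n + 1 - j, j)\<close> such \<open>j\<close>-subsets, which is \<open>C(m + k, m - k)\<close> for \<open>n = 2m - 1\<close>, \<open>j = m - k\<close>.\<close>

definition nonadjacent :: "nat set \<Rightarrow> bool" where
  "nonadjacent I \<longleftrightarrow> (\<forall>i\<in>I. Suc i \<notin> I)"

definition nonadjacent_subsets :: "nat \<Rightarrow> nat \<Rightarrow> nat set set" where
  "nonadjacent_subsets n j = {I. I \<subseteq> {1..n} \<and> nonadjacent I \<and> card I = j}"

lemma finite_nonadjacent_subsets: "finite (nonadjacent_subsets n j)"
  by (rule finite_subset[of _ "Pow {1..n}"]) (auto simp: nonadjacent_subsets_def)

lemma nonadjacent_subsets_0: "nonadjacent_subsets n 0 = {{}}"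
  by (auto simp: nonadjacent_subsets_def nonadjacent_def finite_subset)

lemma card_nonadjacent_subsets_le_1:
  assumes "n \<le> 1"
  shows "card (nonadjacent_subsets n j) = (n + 1 - j) choose j"
proof -
  have "nonadjacent I" if I: "I \<subseteq> {1..n}" for I
  proof -
    have "Suc i \<notin> {1..n}" if "i \<in> {1..n}" for i
      using that assms by auto
    with I show ?thesis unfolding nonadjacent_def by blast
  qed
  then have "nonadjacent_subsets n j = {I. I \<subseteq> {1..n} \<and> card I = j}"
    by (auto simp: nonadjacent_subsets_def)
  then have "card (nonadjacent_subsets n j) = n choose j"
    by (simp add: n_subsets)
  also have "\<dots> = (n + 1 - j) choose j"
    using assms by (cases j; cases "j - 1") (auto simp: le_Suc_eq)
  finally show ?thesis .
qed

lemma nonadjacent_subsets_Suc_Suc: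
  "nonadjacent_subsets (Suc (Suc n)) (Suc j) =
     nonadjacent_subsets (Suc n) (Suc j) \<union> insert (Suc (Suc n)) ` nonadjacent_subsets n j"
  (is "?L = ?A \<union> ?B")
proof (intro equalityI subsetI)
  fix I assume I: "I \<in> ?L"
  show "I \<in> ?A \<union> ?B"
  proof (cases "Suc (Suc n) \<in> I")
    case False
    with I show ?thesis by (auto simp: nonadjacent_subsets_def le_Suc_eq)
  next
    case True
    with I have "Suc n \<notin> I" and "finite I"
      by (auto simp: nonadjacent_subsets_def nonadjacent_def finite_subset)
    with I True have "I - {Suc (Suc n)} \<in> nonadjacent_subsets n j"
      by (auto simp: nonadjacent_subsets_def nonadjacent_def le_Suc_eq)
    with True show ?thesis by (auto intro: image_eqI[of _ _ "I - {Suc (Suc n)}"])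
  qed
next
  fix I assume "I \<in> ?A \<union> ?B"
  then show "I \<in> ?L"
    by (fastforce simp: nonadjacent_subsets_def nonadjacent_def finite_subset card_insert_if)
qed

lemma card_nonadjacent_subsets:
  "card (nonadjacent_subsets n j) = (n + 1 - j) choose j"
proof (induction n arbitrary: j rule: induct_nat_012)
  case (ge2 n)
  show ?case
  proof (cases j)
    case 0
    then show ?thesis by (simp add: nonadjacent_subsets_0)
  next
    case (Suc i)
    have disjoint: "nonadjacent_subsets (Suc n) (Suc i) \<inter> insert (Suc (Suc n)) ` nonadjacent_subsets n i = {}"
      by (auto simp: nonadjacent_subsets_def)
    have "inj_on (insert (Suc (Suc n))) (nonadjacent_subsets n i)"
      by (rule inj_onI) (auto simp: nonadjacent_subsets_def dest!: insert_ident[THEN iffD1, rotated 2])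
    then have "card (nonadjacent_subsets (Suc (Suc n)) j)
        = card (nonadjacent_subsets (Suc n) (Suc i)) + card (nonadjacent_subsets n i)"
      unfolding Suc nonadjacent_subsets_Suc_Suc
      by (simp add: card_Un_disjoint finite_nonadjacent_subsets disjoint card_image)
    also have "\<dots> = (Suc (Suc n) + 1 - j) choose j"
      using ge2 Suc by (cases "i \<le> Suc n") (auto simp: Suc_diff_le)
    finally show ?thesis .
  qed
qed (simp_all add: card_nonadjacent_subsets_le_1)

lemma perfect_matching_subset_Pow: "M \<in> perfect_matchings S \<Longrightarrow> M \<subseteq> Pow S"
  unfolding perfect_matchings_def by force

lemma finite_perfect_matchings: "finite S \<Longrightarrow> finite (perfect_matchings S)"
  by (rule finite_subset[of _ "Pow (Pow S)"]) (auto dest: perfect_matching_subset_Pow)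

lemma finite_perfect_matching: "finite S \<Longrightarrow> M \<in> perfect_matchings S \<Longrightarrow> finite M"
  by (meson finite_Pow_iff finite_subset perfect_matching_subset_Pow)

lemma perfect_matching_edge:
  assumes "M \<in> perfect_matchings S" "e \<in> M"
  shows "\<exists>i j. i \<noteq> j \<and> i \<in> S \<and> j \<in> S \<and> e = {i, j}"
  using assms by (simp add: perfect_matchings_def)

lemma perfect_matching_edge_unique:
  "M \<in> perfect_matchings S \<Longrightarrow> x \<in> S \<Longrightarrow> e \<in> M \<Longrightarrow> e' \<in> M \<Longrightarrow> x \<in> e \<Longrightarrow> x \<in> e' \<Longrightarrow> e = e'"
  unfolding perfect_matchings_def by blast

lemma Union_perfect_matching:
  assumes "M \<in> perfect_matchings S"
  shows "\<Union>M = S"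
proof
  show "\<Union>M \<subseteq> S"
    using perfect_matching_subset_Pow[OF assms] by blast
  show "S \<subseteq> \<Union>M"
    using assms by (auto simp: perfect_matchings_def)
qed

lemma prod_of_bool:
  "finite A \<Longrightarrow> (\<Prod>x\<in>A. of_bool (P x) :: 'a::comm_semiring_1) = of_bool (\<forall>x\<in>A. P x)"
  by (induction A rule: finite_induct) auto

definition domino :: "nat \<Rightarrow> nat set" where
  "domino i = {i, Suc i}"

lemma Min_domino [simp]: "Min (domino i) = i"
  by (simp add: domino_def)

lemma disjoint_dominoes:
  assumes "nonadjacent I" "i \<in> I" "j \<in> I" "i \<noteq> j"
  shows "domino i \<inter> domino j = {}"
  using assms by (auto simp: domino_def nonadjacent_def)

lemma card_Union_domino:
  assumes "finite I" "nonadjacent I"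
  shows "card (\<Union>(domino ` I)) = 2 * card I"
proof -
  have "card (\<Union>(domino ` I)) = (\<Sum>i\<in>I. card (domino i))"
    using assms disjoint_dominoes by (intro card_UN_disjoint) (auto simp: domino_def)
  then show ?thesis
    by (simp add: domino_def)
qed

lemma Union_domino_subset_iff: "\<Union>(domino ` I) \<subseteq> {1..Suc n} \<longleftrightarrow> I \<subseteq> {1..n}"
  by (force simp: domino_def subset_iff)

lemma domino_Min: "e \<in> range domino \<Longrightarrow> domino (Min e) = e"
  by auto

lemma domino_image_Min_image: "M \<subseteq> range domino \<Longrightarrow> domino ` Min ` M = M"
  by (simp add: image_image subset_eq domino_Min)

definition domino_matchings :: "nat set \<Rightarrow> nat set set set" where
  "domino_matchings S = {M \<in> perfect_matchings S. M \<subseteq> range domino}"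

lemma domino_image_in_domino_matchings:
  assumes "nonadjacent I"
  shows "domino ` I \<in> domino_matchings (\<Union>(domino ` I))"
  unfolding domino_matchings_def perfect_matchings_def
proof (intro CollectI conjI ballI)
  fix e assume "e \<in> domino ` I"
  then obtain i where "i \<in> I" "e = domino i" by blast
  then show "\<exists>a b. a \<noteq> b \<and> a \<in> \<Union>(domino ` I) \<and> b \<in> \<Union>(domino ` I) \<and> e = {a, b}"
    by (intro exI[of _ i] exI[of _ "Suc i"]) (auto simp: domino_def)
next
  fix x assume "x \<in> \<Union>(domino ` I)"
  then obtain i where i: "i \<in> I" "x \<in> domino i" by blast
  show "\<exists>!e. e \<in> domino ` I \<and> x \<in> e"
  proof (rule ex1I[of _ "domino i"])
    fix e assume "e \<in> domino ` I \<and> x \<in> e"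
    then obtain j where "j \<in> I" "e = domino j" "x \<in> domino j" by blast
    with i assms disjoint_dominoes show "e = domino i" by blast
  qed (use i in blast)
qed blast

lemma nonadjacent_Min_image:
  assumes M: "M \<in> domino_matchings S"
  shows "nonadjacent (Min ` M)"
  unfolding nonadjacent_def
proof (intro ballI notI)
  fix i assume "i \<in> Min ` M" "Suc i \<in> Min ` M"
  with M have dominoes: "domino i \<in> M" "domino (Suc i) \<in> M"
    by (auto simp: domino_matchings_def subset_eq domino_Min)
  with M have "Suc i \<in> S"
    using Union_perfect_matching by (auto simp: domino_matchings_def domino_def)
  with M dominoes have "domino i = domino (Suc i)"
    by (intro perfect_matching_edge_unique[of M S "Suc i"]) (auto simp: domino_matchings_def domino_def)
  then show False
    by (simp add: domino_def doubleton_eq_iff)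
qed

lemma bij_betw_domino_matchings:
  "bij_betw (image domino) {I. nonadjacent I \<and> \<Union>(domino ` I) = S} (domino_matchings S)"
proof (rule bij_betw_byWitness[where f' = "image Min"])
  show "\<forall>I\<in>{I. nonadjacent I \<and> \<Union>(domino ` I) = S}. Min ` domino ` I = I"
    by (simp add: image_image)
  show "\<forall>M\<in>domino_matchings S. domino ` Min ` M = M"
    by (simp add: domino_matchings_def domino_image_Min_image)
  show "image domino ` {I. nonadjacent I \<and> \<Union>(domino ` I) = S} \<subseteq> domino_matchings S"
    using domino_image_in_domino_matchings by blast
  show "image Min ` domino_matchings S \<subseteq> {I. nonadjacent I \<and> \<Union>(domino ` I) = S}"
    using nonadjacent_Min_image domino_image_Min_image Union_perfect_matching
    by (fastforce simp: domino_matchings_def)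
qed

lemma U1_Min_Max:
  assumes "i \<noteq> j" "i \<in> {1..2*m}" "j \<in> {1..2*m}"
  shows "U1 m (Min {i, j}) (Max {i, j}) = of_bool ({i, j} \<in> range domino)"
  using assms by (cases "i < j") (auto simp: U1_def domino_def doubleton_eq_iff min_def max_def)

lemma U1_perfect_matching_edge:
  assumes "M \<in> perfect_matchings S" "S \<subseteq> {1..2*m}" "e \<in> M"
  shows "U1 m (Min e) (Max e) = of_bool (e \<in> range domino)"
proof -
  obtain i j where "i \<noteq> j" "i \<in> S" "j \<in> S" and e: "e = {i, j}"
    using perfect_matching_edge[OF assms(1,3)] by blast
  with assms(2) show ?thesis
    unfolding e by (intro U1_Min_Max) auto
qed

lemma hafnian_U1:
  assumes "S \<subseteq> {1..2*m}"
  shows "hafnian (U1 m) S = int (card (domino_matchings S))"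
proof -
  have "finite S"
    using assms finite_subset by blast
  have "(\<Prod>e\<in>M. U1 m (Min e) (Max e)) = of_bool (M \<subseteq> range domino)"
    if M: "M \<in> perfect_matchings S" for M
  proof -
    have "(\<Prod>e\<in>M. U1 m (Min e) (Max e)) = (\<Prod>e\<in>M. of_bool (e \<in> range domino))"
      using U1_perfect_matching_edge[OF M assms] by (rule prod.cong[OF refl])
    also have "\<dots> = of_bool (\<forall>e\<in>M. e \<in> range domino)"
      using finite_perfect_matching[OF \<open>finite S\<close> M] by (rule prod_of_bool)
    finally show ?thesis
      by (simp only: Ball_def subset_eq)
  qed
  then have "hafnian (U1 m) S = (\<Sum>M\<in>perfect_matchings S. of_bool (M \<subseteq> range domino))"
    unfolding hafnian_def by (rule sum.cong[OF refl])
  also have "\<dots> = int (card (perfect_matchings S \<inter> {M. M \<subseteq> range domino}))"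
    using finite_perfect_matchings[OF \<open>finite S\<close>] by simp
  finally show ?thesis
    by (simp add: domino_matchings_def Int_def)
qed

lemma card_uncovered_by_dominoes:
  assumes "I \<in> nonadjacent_subsets n j"
  shows "card ({1..Suc n} - \<Union>(domino ` I)) = Suc n - 2 * j"
proof -
  from assms have I: "I \<subseteq> {1..n}" "nonadjacent I" "card I = j"
    by (auto simp: nonadjacent_subsets_def)
  then have covered: "\<Union>(domino ` I) \<subseteq> {1..Suc n}"
    using Union_domino_subset_iff by blast
  have "finite I"
    using I(1) finite_subset by blast
  then have "card (\<Union>(domino ` I)) = 2 * j"
    using card_Union_domino I(2,3) by simp
  moreover have "finite (\<Union>(domino ` I))"
    using covered finite_subset by blast
  ultimately show ?thesis
    using covered by (simp add: card_Diff_subset)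
qed

lemma domino_cover_of_complement_iff:
  assumes "\<alpha> \<subseteq> {1..Suc n}" "card \<alpha> = Suc n - 2 * j" "2 * j \<le> Suc n"
  shows "nonadjacent I \<and> \<Union>(domino ` I) = {1..Suc n} - \<alpha> \<longleftrightarrow>
         I \<in> nonadjacent_subsets n j \<and> {1..Suc n} - \<Union>(domino ` I) = \<alpha>"
proof
  assume I: "nonadjacent I \<and> \<Union>(domino ` I) = {1..Suc n} - \<alpha>"
  then have "I \<subseteq> {1..n}"
    using Union_domino_subset_iff[of I n] by blast
  then have "finite I"
    using finite_subset by blast
  have "finite \<alpha>"
    using assms(1) finite_subset by blast
  have "2 * card I = card ({1..Suc n} - \<alpha>)"
    using I card_Union_domino[OF \<open>finite I\<close>] by simp
  also have "\<dots> = 2 * j"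
    using assms \<open>finite \<alpha>\<close> by (simp add: card_Diff_subset)
  finally have "card I = j"
    by simp
  with I \<open>I \<subseteq> {1..n}\<close> assms(1) show
    "I \<in> nonadjacent_subsets n j \<and> {1..Suc n} - \<Union>(domino ` I) = \<alpha>"
    by (auto simp: nonadjacent_subsets_def)
next
  assume I: "I \<in> nonadjacent_subsets n j \<and> {1..Suc n} - \<Union>(domino ` I) = \<alpha>"
  then show "nonadjacent I \<and> \<Union>(domino ` I) = {1..Suc n} - \<alpha>"
    using Union_domino_subset_iff[of I n] by (auto simp: nonadjacent_subsets_def)
qed

text \<open>Grouping the nonadjacent sets by the set of indices they leave uncovered.\<close>
lemma sum_card_domino_matchings:
  assumes "2 * j \<le> Suc n"
  shows "(\<Sum>\<alpha>\<in>{\<alpha>. \<alpha> \<subseteq> {1..Suc n} \<and> card \<alpha> = Suc n - 2 * j}.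
            card (domino_matchings ({1..Suc n} - \<alpha>)))
         = card (nonadjacent_subsets n j)"
proof -
  define A where "A = {\<alpha>. \<alpha> \<subseteq> {1..Suc n} \<and> card \<alpha> = Suc n - 2 * j}"
  define uncovered where "uncovered I = {1..Suc n} - \<Union>(domino ` I)" for I
  have "card (domino_matchings ({1..Suc n} - \<alpha>))
      = card {I \<in> nonadjacent_subsets n j. uncovered I = \<alpha>}" if "\<alpha> \<in> A" for \<alpha>
  proof -
    have "{I. nonadjacent I \<and> \<Union>(domino ` I) = {1..Suc n} - \<alpha>}
        = {I \<in> nonadjacent_subsets n j. uncovered I = \<alpha>}"
      using domino_cover_of_complement_iff[of \<alpha> n j] that assms
      unfolding A_def uncovered_def by blast
    then show ?thesis
      using bij_betw_same_card[OF bij_betw_domino_matchings, of "{1..Suc n} - \<alpha>"] by simp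
  qed
  then have "(\<Sum>\<alpha>\<in>A. card (domino_matchings ({1..Suc n} - \<alpha>)))
      = (\<Sum>\<alpha>\<in>A. card {I \<in> nonadjacent_subsets n j. uncovered I = \<alpha>})"
    by (rule sum.cong[OF refl])
  also have "\<dots> = card (nonadjacent_subsets n j)"
  proof -
    have "uncovered ` nonadjacent_subsets n j \<subseteq> A"
      using card_uncovered_by_dominoes by (auto simp: A_def uncovered_def)
    moreover have "finite A"
      by (rule finite_subset[of _ "Pow {1..Suc n}"]) (auto simp: A_def)
    ultimately show ?thesis
      using sum.group[OF finite_nonadjacent_subsets, of A uncovered n j "\<lambda>_. 1::nat"] by simp
  qed
  finally show ?thesis
    by (simp add: A_def)
qed

theorem mainTheorem3:
  fixes m k :: nat
  assumes "1 \<le> m" and "k \<le> m"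
  shows "(\<Sum>\<alpha>\<in>{\<alpha>. \<alpha> \<subseteq> {1..2*m} \<and> card \<alpha> = 2*k}. hafnian (U1 m) ({1..2*m} - \<alpha>))
         = int ((m + k) choose (m - k))"
proof -
  define n where "n = 2 * m - 1"
  have n: "Suc n = 2 * m" "2 * m - 2 * (m - k) = 2 * k" "2 * m - (m - k) = m + k"
    using assms by (auto simp: n_def)
  have "(\<Sum>\<alpha>\<in>{\<alpha>. \<alpha> \<subseteq> {1..2*m} \<and> card \<alpha> = 2*k}. hafnian (U1 m) ({1..2*m} - \<alpha>))
      = int (\<Sum>\<alpha>\<in>{\<alpha>. \<alpha> \<subseteq> {1..Suc n} \<and> card \<alpha> = Suc n - 2 * (m - k)}.
               card (domino_matchings ({1..Suc n} - \<alpha>)))"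
    by (simp add: n hafnian_U1)
  also have "\<dots> = int (card (nonadjacent_subsets n (m - k)))"
    using n by (subst sum_card_domino_matchings) auto
  also have "\<dots> = int ((m + k) choose (m - k))"
    by (simp add: card_nonadjacent_subsets n)
  finally show ?thesis .
qed

end
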